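(* Let $X$ be a bounded random vector in $\mathbb R^N$ with $\mathbb E(X)=0$, $Y$ a bounded real random variable, $m=\mathrm{Law}(X)$, and assume $\mathbb P(Y=\alpha+\beta\cdot X)=0$ for all $(\alpha,\beta)\in\mathbb R^{1+N}$. Assume quantile regression is under quasi-specification, i.e. there exist continuous maps $t\in[0,1]\mapsto(\alpha^{QR}(t),\beta^{QR}(t))\in\mathbb R\times\mathbb R^N$ such that for each $t\in[0,1]$ $$\mathbb P(Y>\alpha^{QR}(t)+\beta^{QR}(t)\cdot X)=1-t,\qquad \mathbb E\big(X\,\mathbf 1_{\{Y>\alpha^{QR}(t)+\beta^{QR}(t)\cdot X\}}\big)=0,$$ and for $m$-a.e. $x$, $t\mapsto\alpha^{QR}(t)+\beta^{QR}(t)\cdot x$ is increasing on $[0,1]$. Define $U_t^{QR}:=\mathbf 1_{\{Y>\alpha^{QR}(t)+\beta^{QR}(t)\cdot X\}}$ and $U^{QR}:=\int_0^1U_t^{QR}\,dt$. Then: $U^{QR}$ is uniformly distributed on $[0,1]$; $\mathbb E(X\mid U^{QR})=0$; $Y=\alpha^{QR}(U^{QR})+\beta^{QR}(U^{QR})\cdot X$ a.s.; and $U^{QR}$ solves $$\max\{\mathbb E(VY):\ \mathrm{Law}(V)=\mathrm{uniform}([0,1]),\ \mathbb E(X\mid V)=0\}.$$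
   Context: The conditions displayed on $(\alpha^{QR}(t),\beta^{QR}(t))$ are the first-order conditions of the Koenker–Bassett problem $\inf_{(\alpha,\beta)}\{\mathbb E((Y-\alpha-\beta\cdot X)_+)+(1-t)\alpha\}$. *)

theory Defs
  imports "HOL-Probability.Probability"
begin

definition QR_Ut :: "(real \<Rightarrow> real) \<Rightarrow> (real \<Rightarrow> real ^ 'n) \<Rightarrow> ('a \<Rightarrow> real ^ 'n) \<Rightarrow> ('a \<Rightarrow> real)
                      \<Rightarrow> real \<Rightarrow> 'a \<Rightarrow> real" where
  "QR_Ut \<alpha> \<beta> X Y t \<omega> = indicator {\<omega>. Y \<omega> > \<alpha> t + \<beta> t \<bullet> X \<omega>} \<omega>"

definition QR_U :: "(real \<Rightarrow> real) \<Rightarrow> (real \<Rightarrow> real ^ 'n) \<Rightarrow> ('a \<Rightarrow> real ^ 'n) \<Rightarrow> ('a \<Rightarrow> real)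
                     \<Rightarrow> 'a \<Rightarrow> real" where
  "QR_U \<alpha> \<beta> X Y \<omega> = (LINT t:{0..1}|lborel. QR_Ut \<alpha> \<beta> X Y t \<omega>)"

definition cond_exp_zero :: "'a measure \<Rightarrow> ('a \<Rightarrow> real ^ 'n) \<Rightarrow> ('a \<Rightarrow> real) \<Rightarrow> bool" where
  "cond_exp_zero M X V \<longleftrightarrow>
     (\<forall>i. AE \<omega> in M. real_cond_exp M (vimage_algebra (space M) V borel) (\<lambda>\<omega>. X \<omega> $ i) \<omega> = 0)"

definition uniform01 :: "'a measure \<Rightarrow> ('a \<Rightarrow> real) \<Rightarrow> bool" where
  "uniform01 M V \<longleftrightarrow> V \<in> borel_measurable M \<and> distr M lborel V = uniform_measure lborel {0..1}"

end

(*
  For almost every \<omega> the map t \<mapsto> \<alpha>(t) + \<beta>(t)\<cdot>X(\<omega>) is increasing, so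
  U(\<omega>) = |{t \<in> [0,1]. \<alpha>(t) + \<beta>(t)\<cdot>X(\<omega>) < Y(\<omega>)}| is the level at which it crosses Y(\<omega>):
  the events {U > t} and {Y > \<alpha>(t) + \<beta>(t)\<cdot>X} coincide up to null sets.  The first
  quasi-specification condition then says that U is uniform, the second that X is orthogonal
  to every {U > t}, hence E(X | U) = 0, and continuity of \<alpha>, \<beta> gives Y = \<alpha>(U) + \<beta>(U)\<cdot>X.
  Optimality is the bathtub principle at each level t: among weights 0 \<le> f \<le> 1 with the mass
  and the X-moment of 1{Y > \<alpha>(t) + \<beta>(t)\<cdot>X}, that indicator maximises E(f Y).  A competitor V
  offers the weights 1{V > t}, and integrating over t gives E(V Y) \<le> E(U Y) since
  V = \<integral>\<^sub>0\<^sup>1 1{t < V} dt and U = \<integral>\<^sub>0\<^sup>1 U\<^sub>t dt.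
*)
theory Submission
  imports Defs
begin

section \<open>Integration over the unit interval\<close>

abbreviation unit_interval :: "real measure" where
  "unit_interval \<equiv> restrict_space lborel {0..1}"

lemma set_integral_unit_interval:
  fixes f :: "real \<Rightarrow> 'b::{banach, second_countable_topology}"
  shows "(LINT t:{0..1}|lborel. f t) = integral\<^sup>L unit_interval f"
  by (subst integral_restrict_space) (auto simp: set_lebesgue_integral_def)

lemma prob_space_unit_interval: "prob_space unit_interval"
  by (rule prob_spaceI) (simp add: emeasure_restrict_space)

lemma id_measurable_unit_interval[measurable]: "(\<lambda>t. t) \<in> borel_measurable unit_interval"
  by (simp add: measurable_restrict_space1)

lemma borel_measurable_continuous_on_restrict_lborel:
  "continuous_on A f \<Longrightarrow> f \<in> borel_measurable (restrict_space lborel A)"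
  by (subst measurable_cong_sets[OF sets_restrict_space_cong[OF sets_lborel] refl])
     (rule borel_measurable_continuous_on_restrict)

lemma (in prob_space) Fubini_unit_interval:
  fixes F :: "real \<Rightarrow> 'a \<Rightarrow> real"
  assumes F: "(\<lambda>(t, \<omega>). F t \<omega>) \<in> borel_measurable (unit_interval \<Otimes>\<^sub>M M)"
    and bound: "\<And>t \<omega>. t \<in> {0..1} \<Longrightarrow> \<omega> \<in> space M \<Longrightarrow> \<bar>F t \<omega>\<bar> \<le> B"
  shows "(\<lambda>\<omega>. LINT t:{0..1}|lborel. F t \<omega>) \<in> borel_measurable M"
    and "integrable unit_interval (\<lambda>t. \<integral>\<omega>. F t \<omega> \<partial>M)"
    and "(\<integral>\<omega>. (LINT t:{0..1}|lborel. F t \<omega>) \<partial>M) = (LINT t:{0..1}|lborel. \<integral>\<omega>. F t \<omega> \<partial>M)"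
proof -
  interpret I: prob_space unit_interval by (rule prob_space_unit_interval)
  interpret IM: pair_sigma_finite unit_interval M ..
  interpret finite_measure "unit_interval \<Otimes>\<^sub>M M"
    by (rule finite_measure_pair_measure) unfold_locales
  have "(\<lambda>(\<omega>, t). F t \<omega>) \<in> borel_measurable (M \<Otimes>\<^sub>M unit_interval)"
    using F by (subst measurable_pair_swap_iff) (simp add: case_prod_beta')
  then show "(\<lambda>\<omega>. LINT t:{0..1}|lborel. F t \<omega>) \<in> borel_measurable M"
    unfolding set_integral_unit_interval by (rule I.borel_measurable_lebesgue_integral)
  have "integrable (unit_interval \<Otimes>\<^sub>M M) (\<lambda>(t, \<omega>). F t \<omega>)"
    by (rule integrable_const_bound[where B=B])
       (use F bound in \<open>auto simp: space_pair_measure\<close>)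
  then show "integrable unit_interval (\<lambda>t. \<integral>\<omega>. F t \<omega> \<partial>M)"
    and "(\<integral>\<omega>. (LINT t:{0..1}|lborel. F t \<omega>) \<partial>M) = (LINT t:{0..1}|lborel. \<integral>\<omega>. F t \<omega> \<partial>M)"
    using IM.integrable_fst'[of "\<lambda>(t, \<omega>). F t \<omega>"] IM.Fubini_integral[of F]
    by (simp_all add: set_integral_unit_interval)
qed

lemma set_integral_indicator_greaterThan_unit_interval:
  fixes v :: real
  assumes "v \<in> {0..1}"
  shows "(LINT t:{0..1}|lborel. indicator {t<..} v :: real) = v"
proof -
  have "(LINT t:{0..1}|lborel. indicator {t<..} v :: real) = (LBINT t. indicator {0..<v} t)"
    unfolding set_lebesgue_integral_def
    by (rule Bochner_Integration.integral_cong) (use assms in \<open>auto split: split_indicator\<close>)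
  then show ?thesis using assms by simp
qed

section \<open>The uniform distribution on the unit interval\<close>

lemma measure_uniform_unit_interval_greaterThan:
  "measure (uniform_measure lborel {0..1}) {x<..} = (if x < 0 then 1 else if x \<le> 1 then 1 - x else 0)"
proof -
  have "{0..1} \<inter> {x<..} = (if x < 0 then {0..1} else if x \<le> 1 then {x<..1} else {})"
    by auto
  then show ?thesis by (subst measure_uniform_measure) auto
qed

context prob_space
begin

lemma prob_greaterThan_eq_measure_distr:
  fixes V :: "'a \<Rightarrow> real"
  shows "V \<in> borel_measurable M \<Longrightarrow> prob {\<omega>\<in>space M. x < V \<omega>} = measure (distr M lborel V) {x<..}"
  by (subst measure_distr) (auto intro!: arg_cong[where f=prob])

lemma uniform01_prob_greaterThan:
  assumes "uniform01 M V" "t \<in> {0..1}"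
  shows "prob {\<omega>\<in>space M. t < V \<omega>} = 1 - t"
  using assms by (simp add: uniform01_def prob_greaterThan_eq_measure_distr
      measure_uniform_unit_interval_greaterThan)

lemma uniform01_AE_in_unit_interval:
  assumes "uniform01 M V"
  shows "AE \<omega> in M. V \<omega> \<in> {0..1}"
proof -
  have V: "V \<in> borel_measurable M" and D: "distr M lborel V = uniform_measure lborel {0..1}"
    using assms by (auto simp: uniform01_def)
  have "AE v in distr M lborel V. v \<in> {0..1}"
    unfolding D by (simp add: AE_uniform_measure)
  moreover have "V \<in> M \<rightarrow>\<^sub>M lborel" using V by simp
  ultimately show ?thesis by (rule AE_distrD[rotated])
qed

lemma uniform01_AE_neq:
  assumes "uniform01 M V"
  shows "AE \<omega> in M. V \<omega> \<noteq> c"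
proof -
  have V: "V \<in> borel_measurable M" and D: "distr M lborel V = uniform_measure lborel {0..1}"
    using assms by (auto simp: uniform01_def)
  have "AE v in distr M lborel V. v \<noteq> c"
    unfolding D using AE_lborel_singleton[of c] by (simp add: AE_uniform_measure) (auto elim: AE_mp)
  moreover have "V \<in> M \<rightarrow>\<^sub>M lborel" using V by simp
  ultimately show ?thesis by (rule AE_distrD[rotated])
qed

text \<open>The right-continuity of \<open>t \<mapsto> P(V > t)\<close> turns the sandwich
  \<open>P(V > t) \<le> 1 - t \<le> P(V \<ge> t)\<close> into the exact tail of the uniform law.\<close>
lemma uniform01I_tail_bounds:
  assumes V[measurable]: "V \<in> borel_measurable M"
    and range: "\<And>\<omega>. \<omega> \<in> space M \<Longrightarrow> V \<omega> \<in> {0..1}"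
    and upper: "\<And>t. t \<in> {0..1} \<Longrightarrow> prob {\<omega>\<in>space M. t < V \<omega>} \<le> 1 - t"
    and lower: "\<And>t. t \<in> {0..1} \<Longrightarrow> 1 - t \<le> prob {\<omega>\<in>space M. t \<le> V \<omega>}"
  shows "uniform01 M V"
proof -
  have tail: "prob {\<omega>\<in>space M. x < V \<omega>} = (if x < 0 then 1 else if x \<le> 1 then 1 - x else 0)" for x
  proof -
    consider "x < 0" | "x \<in> {0..<1}" | "x = 1" | "1 < x" by fastforce
    then show ?thesis
    proof cases
      case 1
      then have "{\<omega>\<in>space M. x < V \<omega>} = space M" using range by fastforce
      then show ?thesis using 1 by (simp add: prob_space)
    next
      case 2
      have "1 - x \<le> prob {\<omega>\<in>space M. x < V \<omega>}"
      proof (rule dense_le_bounded[of 0])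
        fix w :: real assume w: "0 < w" "w < 1 - x"
        have "w = 1 - (1 - w)" by simp
        also have "\<dots> \<le> prob {\<omega>\<in>space M. 1 - w \<le> V \<omega>}" using w 2 by (intro lower) auto
        also have "\<dots> \<le> prob {\<omega>\<in>space M. x < V \<omega>}" using w by (intro finite_measure_mono) auto
        finally show "w \<le> prob {\<omega>\<in>space M. x < V \<omega>}" .
      qed (use 2 in auto)
      with upper[of x] 2 show ?thesis by auto
    next
      case 3
      then show ?thesis
        using upper[of 1] measure_nonneg[of M "{\<omega>\<in>space M. 1 < V \<omega>}"] by simp
    next
      case 4
      then have "{\<omega>\<in>space M. x < V \<omega>} = {}" using range by fastforce
      then have "prob {\<omega>\<in>space M. x < V \<omega>} = 0" by (simp only: measure_empty)
      with 4 show ?thesis by simp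
    qed
  qed
  interpret D: prob_space "distr M lborel V" by (rule prob_space_distr) simp
  interpret U: prob_space "uniform_measure lborel {0..1::real}" by (rule prob_space_uniform_measure) auto
  have "distr M lborel V = uniform_measure lborel {0..1}"
  proof (rule measure_eqI_lessThan)
    fix x :: real
    show "emeasure (distr M lborel V) {x<..} = emeasure (uniform_measure lborel {0..1}) {x<..}"
      using tail[of x] by (simp add: D.emeasure_eq_measure U.emeasure_eq_measure
          prob_greaterThan_eq_measure_distr measure_uniform_unit_interval_greaterThan)
  qed (simp_all add: D.emeasure_eq_measure)
  then show ?thesis by (simp add: uniform01_def)
qed

end

section \<open>Conditional expectation given a real random variable\<close>

lemma integrable_bounded_scaleR:
  fixes h :: "'a \<Rightarrow> 'b::{banach, second_countable_topology}"
  assumes "integrable M h" "g \<in> borel_measurable M" "\<And>\<omega>. \<omega> \<in> space M \<Longrightarrow> \<bar>g \<omega>\<bar> \<le> 1"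
  shows "integrable M (\<lambda>\<omega>. g \<omega> *\<^sub>R h \<omega>)"
proof (rule Bochner_Integration.integrable_bound[OF assms(1)])
  show "AE \<omega> in M. norm (g \<omega> *\<^sub>R h \<omega>) \<le> norm (h \<omega>)"
    using assms(3) by (auto intro!: mult_left_le_one_le)
qed (use assms in measurable)

lemma integrable_indicator_comp_scaleR:
  fixes V :: "'a \<Rightarrow> real" and h :: "'a \<Rightarrow> 'b::{banach, second_countable_topology}"
  assumes "V \<in> borel_measurable M" "integrable M h" "B \<in> sets borel"
  shows "integrable M (\<lambda>\<omega>. indicator B (V \<omega>) *\<^sub>R h \<omega>)"
  by (rule integrable_bounded_scaleR[OF assms(2)]) (use assms in \<open>auto split: split_indicator\<close>)

lemma integral_vec_nth:
  fixes f :: "'a \<Rightarrow> real ^ 'n"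
  shows "integrable M f \<Longrightarrow> (\<integral>\<omega>. f \<omega> \<partial>M) $ i = (\<integral>\<omega>. f \<omega> $ i \<partial>M)"
  by (rule integral_bounded_linear[OF bounded_linear_vec_nth, symmetric])

text \<open>Push the positive and negative parts of \<open>h\<close> forward along \<open>V\<close>: the two
  resulting finite measures agree on the half-lines \<open>{x<..}\<close>, hence on all Borel sets.\<close>
lemma integral_indicator_comp_eq_0_if_greaterThan:
  fixes V :: "'a \<Rightarrow> real" and h :: "'a \<Rightarrow> real"
  assumes V[measurable]: "V \<in> borel_measurable M" and h: "integrable M h"
    and half_lines: "\<And>x. (\<integral>\<omega>. indicator {x<..} (V \<omega>) * h \<omega> \<partial>M) = 0"
    and B: "B \<in> sets borel"
  shows "(\<integral>\<omega>. indicator B (V \<omega>) * h \<omega> \<partial>M) = 0"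
proof -
  define hp where "hp \<omega> = max 0 (h \<omega>)" for \<omega>
  define hn where "hn \<omega> = max 0 (- h \<omega>)" for \<omega>
  have hp: "integrable M hp" and hn: "integrable M hn"
    using h unfolding hp_def hn_def by auto
  define push where "push g = distr (density M (\<lambda>\<omega>. ennreal (g \<omega>))) borel V" for g
  have emeasure_push: "emeasure (push g) C = ennreal (\<integral>\<omega>. indicator C (V \<omega>) * g \<omega> \<partial>M)"
    if C: "C \<in> sets borel" and g: "integrable M g" "\<And>\<omega>. 0 \<le> g \<omega>" for C g
  proof -
    have [measurable]: "g \<in> borel_measurable M" using g by auto
    have "emeasure (push g) C = (\<integral>\<^sup>+\<omega>. ennreal (g \<omega>) * indicator (V -` C \<inter> space M) \<omega> \<partial>M)"
      unfolding push_def using C by (simp add: emeasure_distr emeasure_density)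
    also have "\<dots> = (\<integral>\<^sup>+\<omega>. ennreal (indicator C (V \<omega>) * g \<omega>) \<partial>M)"
      by (rule nn_integral_cong) (auto split: split_indicator)
    also have "\<dots> = ennreal (\<integral>\<omega>. indicator C (V \<omega>) * g \<omega> \<partial>M)"
      using C g integrable_indicator_comp_scaleR[OF V g(1) C] by (intro nn_integral_eq_integral) auto
    finally show ?thesis .
  qed
  have push_hp: "emeasure (push hp) C = ennreal (\<integral>\<omega>. indicator C (V \<omega>) * hp \<omega> \<partial>M)"
    and push_hn: "emeasure (push hn) C = ennreal (\<integral>\<omega>. indicator C (V \<omega>) * hn \<omega> \<partial>M)"
    if "C \<in> sets borel" for C
    by (rule emeasure_push[OF that hp], simp add: hp_def) (rule emeasure_push[OF that hn], simp add: hn_def)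
  have split: "(\<integral>\<omega>. indicator C (V \<omega>) * h \<omega> \<partial>M)
      = (\<integral>\<omega>. indicator C (V \<omega>) * hp \<omega> \<partial>M) - (\<integral>\<omega>. indicator C (V \<omega>) * hn \<omega> \<partial>M)"
    if C: "C \<in> sets borel" for C
  proof -
    have "(\<integral>\<omega>. indicator C (V \<omega>) * h \<omega> \<partial>M)
        = (\<integral>\<omega>. indicator C (V \<omega>) * hp \<omega> - indicator C (V \<omega>) * hn \<omega> \<partial>M)"
      by (rule Bochner_Integration.integral_cong) (auto simp: hp_def hn_def split: split_indicator)
    also have "\<dots> = (\<integral>\<omega>. indicator C (V \<omega>) * hp \<omega> \<partial>M) - (\<integral>\<omega>. indicator C (V \<omega>) * hn \<omega> \<partial>M)"
      using integrable_indicator_comp_scaleR[OF V hp C] integrable_indicator_comp_scaleR[OF V hn C]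
      by (intro Bochner_Integration.integral_diff) simp_all
    finally show ?thesis .
  qed
  have "push hp = push hn"
  proof (rule measure_eqI_lessThan)
    fix x :: real
    show "emeasure (push hp) {x<..} < \<infinity>"
      by (simp add: push_hp)
    show "emeasure (push hp) {x<..} = emeasure (push hn) {x<..}"
      using split[of "{x<..}"] half_lines[of x] by (simp add: push_hp push_hn)
  qed (simp_all add: push_def)
  then have "ennreal (\<integral>\<omega>. indicator B (V \<omega>) * hp \<omega> \<partial>M) = ennreal (\<integral>\<omega>. indicator B (V \<omega>) * hn \<omega> \<partial>M)"
    using push_hp[OF B] push_hn[OF B] by simp
  moreover have "0 \<le> (\<integral>\<omega>. indicator B (V \<omega>) * hp \<omega> \<partial>M)" "0 \<le> (\<integral>\<omega>. indicator B (V \<omega>) * hn \<omega> \<partial>M)"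
    by (auto simp: hp_def hn_def intro!: Bochner_Integration.integral_nonneg)
  ultimately show ?thesis using split[OF B] by simp
qed

context prob_space
begin

lemma real_cond_exp_vimage_eq_0_iff:
  fixes V :: "'a \<Rightarrow> real" and h :: "'a \<Rightarrow> real"
  assumes V[measurable]: "V \<in> borel_measurable M" and h: "integrable M h"
  shows "(AE \<omega> in M. real_cond_exp M (vimage_algebra (space M) V borel) h \<omega> = 0)
     \<longleftrightarrow> (\<forall>x. (\<integral>\<omega>. indicator {x<..} (V \<omega>) * h \<omega> \<partial>M) = 0)"
proof -
  define F where "F = vimage_algebra (space M) V borel"
  interpret F: finite_measure_subalgebra M F
  proof
    show "subalgebra M F"
      unfolding F_def subalgebra_def using measurable_iff_sets[of V M borel] by auto
  qed
  have set_integral_vimage: "(\<integral>\<omega>\<in>V -` B \<inter> space M. g \<omega> \<partial>M) = (\<integral>\<omega>. indicator B (V \<omega>) * g \<omega> \<partial>M)"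
    for B and g :: "'a \<Rightarrow> real"
    unfolding set_lebesgue_integral_def
    by (rule Bochner_Integration.integral_cong) (auto split: split_indicator)
  show ?thesis
  proof
    assume ae: "AE \<omega> in M. real_cond_exp M (vimage_algebra (space M) V borel) h \<omega> = 0"
    show "\<forall>x. (\<integral>\<omega>. indicator {x<..} (V \<omega>) * h \<omega> \<partial>M) = 0"
    proof
      fix x :: real
      have "V -` {x<..} \<inter> space M \<in> sets F" unfolding F_def by (rule in_vimage_algebra) simp
      then have "(\<integral>\<omega>\<in>V -` {x<..} \<inter> space M. h \<omega> \<partial>M)
          = (\<integral>\<omega>\<in>V -` {x<..} \<inter> space M. real_cond_exp M F h \<omega> \<partial>M)"
        using h by (rule F.real_cond_exp_intA[rotated])
      also have "\<dots> = (\<integral>\<omega>\<in>V -` {x<..} \<inter> space M. 0 \<partial>M)"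
        unfolding set_lebesgue_integral_def
        by (rule integral_cong_AE) (use ae in \<open>auto simp: F_def elim: AE_mp\<close>)
      finally show "(\<integral>\<omega>. indicator {x<..} (V \<omega>) * h \<omega> \<partial>M) = 0"
        by (simp add: set_integral_vimage)
    qed
  next
    assume half_lines: "\<forall>x. (\<integral>\<omega>. indicator {x<..} (V \<omega>) * h \<omega> \<partial>M) = 0"
    have "AE \<omega> in M. real_cond_exp M F h \<omega> = (\<lambda>_. 0) \<omega>"
    proof (rule F.real_cond_exp_charact)
      fix A assume "A \<in> sets F"
      then obtain B where "B \<in> sets borel" "A = V -` B \<inter> space M"
        unfolding F_def by (subst (asm) sets_vimage_algebra2) auto
      then show "(\<integral>\<omega>\<in>A. h \<omega> \<partial>M) = (\<integral>\<omega>\<in>A. 0 \<partial>M)"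
        using integral_indicator_comp_eq_0_if_greaterThan[OF V h] half_lines
        by (simp add: set_integral_vimage)
    qed (use h in simp_all)
    then show "AE \<omega> in M. real_cond_exp M (vimage_algebra (space M) V borel) h \<omega> = 0"
      by (simp add: F_def)
  qed
qed

lemma cond_exp_zero_iff_greaterThan:
  fixes X :: "'a \<Rightarrow> real ^ 'n" and V :: "'a \<Rightarrow> real"
  assumes V: "V \<in> borel_measurable M" and X: "integrable M X"
  shows "cond_exp_zero M X V \<longleftrightarrow> (\<forall>x. (\<integral>\<omega>. indicator {x<..} (V \<omega>) *\<^sub>R X \<omega> \<partial>M) = 0)"
proof -
  have X_nth: "integrable M (\<lambda>\<omega>. X \<omega> $ i)" for i
    using integrable_bounded_linear[OF bounded_linear_vec_nth X] .
  have nth_integral: "(\<integral>\<omega>. indicator {x<..} (V \<omega>) *\<^sub>R X \<omega> \<partial>M) $ i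
      = (\<integral>\<omega>. indicator {x<..} (V \<omega>) * X \<omega> $ i \<partial>M)" for x i
    using integral_vec_nth[OF integrable_indicator_comp_scaleR[OF V X]] by simp
  show ?thesis
    unfolding cond_exp_zero_def real_cond_exp_vimage_eq_0_iff[OF V X_nth] vec_eq_iff nth_integral
    by auto
qed

end

section \<open>Sublevel lengths of monotone functions\<close>

text \<open>For increasing \<open>g\<close> this is a generalised inverse of \<open>g\<close> evaluated at \<open>y\<close>.\<close>
definition sublevel_length :: "(real \<Rightarrow> real) \<Rightarrow> real \<Rightarrow> real" where
  "sublevel_length g y = measure lborel {t\<in>{0..1}. g t < y}"

lemma sublevel_in_sets_lborel:
  fixes g :: "real \<Rightarrow> real"
  assumes "g \<in> borel_measurable (restrict_space borel {0..1})"
  shows "{t\<in>{0..1}. g t < y} \<in> sets lborel"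
proof -
  have "g -` {..<y} \<inter> {0..1} \<in> sets (restrict_space borel {0..1})"
    using measurable_sets[OF assms, of "{..<y}"] by simp
  moreover have "{t\<in>{0..1}. g t < y} = g -` {..<y} \<inter> {0..1}" by auto
  ultimately show ?thesis by (simp add: sets_restrict_space_iff)
qed

lemma sublevel_length_le_1:
  assumes "g \<in> borel_measurable (restrict_space borel {0..1})"
  shows "sublevel_length g y \<le> 1"
proof -
  have "measure lborel {t\<in>{0..1}. g t < y} \<le> measure lborel {0..1::real}"
    using sublevel_in_sets_lborel[OF assms] fmeasurable_cbox[of "0::real" 1]
    by (intro measure_mono_fmeasurable) auto
  then show ?thesis by (simp add: sublevel_length_def)
qed

lemma le_sublevel_length:
  fixes g :: "real \<Rightarrow> real"
  assumes g: "mono_on {0..1} g" and t: "t \<in> {0..1}" and less: "g t < y"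
  shows "t \<le> sublevel_length g y"
proof -
  have "{0..t} \<subseteq> {s\<in>{0..1}. g s < y}"
  proof
    fix s assume "s \<in> {0..t}"
    then have "g s \<le> g t" using t by (intro mono_onD[OF g]) auto
    then show "s \<in> {s\<in>{0..1}. g s < y}" using \<open>s \<in> {0..t}\<close> t less by auto
  qed
  moreover have "{s\<in>{0..1}. g s < y} \<in> fmeasurable lborel"
    by (rule fmeasurableI2[of "{0..1}"])
       (use sublevel_in_sets_lborel[OF borel_measurable_mono_on_fnc[OF g]]
          fmeasurable_cbox[of "0::real" 1] in auto)
  ultimately have "measure lborel {0..t} \<le> sublevel_length g y"
    unfolding sublevel_length_def by (intro measure_mono_fmeasurable) auto
  then show ?thesis using t by simp
qed

lemma sublevel_length_le:
  fixes g :: "real \<Rightarrow> real"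
  assumes g: "mono_on {0..1} g" and t: "t \<in> {0..1}" and ge: "y \<le> g t"
  shows "sublevel_length g y \<le> t"
proof -
  have "{s\<in>{0..1}. g s < y} \<subseteq> {0..t}"
  proof
    fix s assume s: "s \<in> {s\<in>{0..1}. g s < y}"
    have "s \<le> t"
    proof (rule ccontr)
      assume "\<not> s \<le> t"
      then have "g t \<le> g s" using s t by (intro mono_onD[OF g]) auto
      then show False using s ge by simp
    qed
    then show "s \<in> {0..t}" using s by simp
  qed
  moreover have "{0..t} \<in> fmeasurable lborel"
    using fmeasurable_cbox[of 0 t] by simp
  ultimately have "sublevel_length g y \<le> measure lborel {0..t}"
    unfolding sublevel_length_def
    by (intro measure_mono_fmeasurable sublevel_in_sets_lborel borel_measurable_mono_on_fnc[OF g])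
  then show ?thesis using t by simp
qed

lemma sublevel_length_solves:
  fixes g :: "real \<Rightarrow> real"
  assumes g: "mono_on {0..1} g" "continuous_on {0..1} g"
    and interior: "0 < sublevel_length g y" "sublevel_length g y < 1"
  shows "g (sublevel_length g y) = y"
proof -
  define u where "u = sublevel_length g y"
  have below: "{0..<u} \<subseteq> {0..1} \<inter> g -` {..y}"
  proof
    fix s assume s: "s \<in> {0..<u}"
    then have "s \<in> {0..1}" using interior by (simp add: u_def)
    moreover from this have "\<not> y \<le> g s"
      using s sublevel_length_le[OF g(1), of s y] by (auto simp: u_def)
    ultimately show "s \<in> {0..1} \<inter> g -` {..y}" by simp
  qed
  have above: "{u<..1} \<subseteq> {0..1} \<inter> g -` {y..}"
  proof
    fix s assume s: "s \<in> {u<..1}"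
    then have "s \<in> {0..1}" using interior by (simp add: u_def)
    moreover from this have "\<not> g s < y"
      using s le_sublevel_length[OF g(1), of s y] by (auto simp: u_def)
    ultimately show "s \<in> {0..1} \<inter> g -` {y..}" by simp
  qed
  have "closed ({0..1} \<inter> g -` {..y})" "closed ({0..1} \<inter> g -` {y..})"
    by (intro continuous_closed_preimage[OF g(2)]; simp)+
  then have "closure {0..<u} \<subseteq> {0..1} \<inter> g -` {..y}" "closure {u<..1} \<subseteq> {0..1} \<inter> g -` {y..}"
    using closure_minimal[OF below] closure_minimal[OF above] by blast+
  moreover have "u \<in> closure {0..<u}" "u \<in> closure {u<..1}"
    using interior by (simp_all add: u_def)
  ultimately have "g u \<le> y" "y \<le> g u" by blast+
  then show ?thesis by (simp add: u_def)
qed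

section \<open>The bathtub principle\<close>

text \<open>\<open>E(f Y)\<close> differs from \<open>E(f (Y - a - b \<bullet> X))\<close> only by the prescribed moments,
  and \<open>f (Y - a - b \<bullet> X) \<le> (Y - a - b \<bullet> X)\<^sup>+\<close> pointwise.\<close>
lemma (in prob_space) bathtub_inequality:
  fixes X :: "'a \<Rightarrow> 'b::euclidean_space" and Y f :: "'a \<Rightarrow> real" and a :: real and b :: 'b
  defines "S \<equiv> {\<omega>. a + b \<bullet> X \<omega> < Y \<omega>}"
  assumes X[measurable]: "integrable M X" and Y[measurable]: "integrable M Y"
    and f[measurable]: "f \<in> borel_measurable M" and f_range: "\<And>\<omega>. \<omega> \<in> space M \<Longrightarrow> f \<omega> \<in> {0..1}"
    and mass: "(\<integral>\<omega>. f \<omega> \<partial>M) = (\<integral>\<omega>. indicator S \<omega> \<partial>M)"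
    and moment: "(\<integral>\<omega>. f \<omega> *\<^sub>R X \<omega> \<partial>M) = (\<integral>\<omega>. indicator S \<omega> *\<^sub>R X \<omega> \<partial>M)"
  shows "(\<integral>\<omega>. f \<omega> * Y \<omega> \<partial>M) \<le> (\<integral>\<omega>. indicator S \<omega> * Y \<omega> \<partial>M)"
proof -
  define d where "d \<omega> = Y \<omega> - (a + b \<bullet> X \<omega>)" for \<omega>
  have d: "integrable M d"
    unfolding d_def using X Y by (intro Bochner_Integration.integrable_diff integrable_inner_right) auto
  have "S \<inter> space M \<in> sets M"
    unfolding S_def by (simp add: Int_def conj_commute) measurable
  then have S: "(indicator S :: 'a \<Rightarrow> real) \<in> borel_measurable M" "\<And>\<omega>. \<bar>indicator S \<omega> :: real\<bar> \<le> 1"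
    by (simp_all add: borel_measurable_indicator_iff split: split_indicator)
  have f_abs: "\<And>\<omega>. \<omega> \<in> space M \<Longrightarrow> \<bar>f \<omega>\<bar> \<le> 1"
    using f_range by fastforce
  have decompose: "(\<integral>\<omega>. g \<omega> * Y \<omega> \<partial>M)
      = (\<integral>\<omega>. g \<omega> * d \<omega> \<partial>M) + a * (\<integral>\<omega>. g \<omega> \<partial>M) + b \<bullet> (\<integral>\<omega>. g \<omega> *\<^sub>R X \<omega> \<partial>M)"
    if g: "g \<in> borel_measurable M" "\<And>\<omega>. \<omega> \<in> space M \<Longrightarrow> \<bar>g \<omega>\<bar> \<le> 1" for g
  proof -
    have gX: "integrable M (\<lambda>\<omega>. g \<omega> *\<^sub>R X \<omega>)" and gd: "integrable M (\<lambda>\<omega>. g \<omega> *\<^sub>R d \<omega>)"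
      and g1: "integrable M g"
      using integrable_bounded_scaleR[OF X g] integrable_bounded_scaleR[OF d g]
        integrable_bounded_scaleR[OF integrable_const[of "1::real"] g] by simp_all
    have "(\<integral>\<omega>. g \<omega> * Y \<omega> \<partial>M) = (\<integral>\<omega>. g \<omega> * d \<omega> + a * g \<omega> + b \<bullet> (g \<omega> *\<^sub>R X \<omega>) \<partial>M)"
      by (rule Bochner_Integration.integral_cong) (auto simp: d_def algebra_simps)
    also have "\<dots> = (\<integral>\<omega>. g \<omega> * d \<omega> \<partial>M) + (\<integral>\<omega>. a * g \<omega> \<partial>M) + (\<integral>\<omega>. b \<bullet> (g \<omega> *\<^sub>R X \<omega>) \<partial>M)"
      using gX gd g1 by (simp del: inner_scaleR_right)
    also have "\<dots> = (\<integral>\<omega>. g \<omega> * d \<omega> \<partial>M) + a * (\<integral>\<omega>. g \<omega> \<partial>M) + b \<bullet> (\<integral>\<omega>. g \<omega> *\<^sub>R X \<omega> \<partial>M)"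
      using gX by (simp del: inner_scaleR_right)
    finally show ?thesis .
  qed
  have "(\<integral>\<omega>. f \<omega> * d \<omega> \<partial>M) \<le> (\<integral>\<omega>. indicator S \<omega> * d \<omega> \<partial>M)"
  proof (rule integral_mono)
    show "integrable M (\<lambda>\<omega>. f \<omega> * d \<omega>)" "integrable M (\<lambda>\<omega>. indicator S \<omega> * d \<omega>)"
      using integrable_bounded_scaleR[OF d f f_abs] integrable_bounded_scaleR[OF d S] by simp_all
    fix \<omega> assume "\<omega> \<in> space M"
    then show "f \<omega> * d \<omega> \<le> indicator S \<omega> * d \<omega>"
      using f_range[of \<omega>] by (auto simp: S_def d_def mult_le_cancel_right1 mult_nonneg_nonpos split: split_indicator)
  qed
  then show ?thesis
    using decompose[OF f f_abs] decompose[OF S] mass moment by simp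
qed

section \<open>Quantile regression under quasi-specification\<close>

locale quasi_specified_quantile_regression = prob_space M for M :: "'a measure" +
  fixes X :: "'a \<Rightarrow> real ^ 'n" and Y :: "'a \<Rightarrow> real"
    and \<alpha> :: "real \<Rightarrow> real" and \<beta> :: "real \<Rightarrow> real ^ 'n"
  assumes X_measurable: "X \<in> borel_measurable M" and Y_measurable: "Y \<in> borel_measurable M"
    and X_bounded: "\<exists>B. \<forall>\<omega>\<in>space M. norm (X \<omega>) \<le> B"
    and Y_bounded: "\<exists>B. \<forall>\<omega>\<in>space M. \<bar>Y \<omega>\<bar> \<le> B"
    and \<alpha>_continuous: "continuous_on {0..1} \<alpha>" and \<beta>_continuous: "continuous_on {0..1} \<beta>"
    and prob_above: "\<And>t. t \<in> {0..1} \<Longrightarrow> prob {\<omega>\<in>space M. Y \<omega> > \<alpha> t + \<beta> t \<bullet> X \<omega>} = 1 - t"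
    and orthogonal: "\<And>t. t \<in> {0..1} \<Longrightarrow> (\<integral>\<omega>. QR_Ut \<alpha> \<beta> X Y t \<omega> *\<^sub>R X \<omega> \<partial>M) = 0"
    and AE_mono: "AE \<omega> in M. mono_on {0..1} (\<lambda>t. \<alpha> t + \<beta> t \<bullet> X \<omega>)"
begin

declare X_measurable[measurable] Y_measurable[measurable]

abbreviation U :: "'a \<Rightarrow> real" where
  "U \<equiv> QR_U \<alpha> \<beta> X Y"

lemma integrable_X: "integrable M X"
proof -
  obtain B where "\<forall>\<omega>\<in>space M. norm (X \<omega>) \<le> B" using X_bounded by blast
  then show ?thesis by (intro integrable_const_bound[where B=B]) auto
qed

lemma integrable_Y: "integrable M Y"
proof -
  obtain B where "\<forall>\<omega>\<in>space M. \<bar>Y \<omega>\<bar> \<le> B" using Y_bounded by blast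
  then show ?thesis by (intro integrable_const_bound[where B=B]) auto
qed

lemma \<alpha>_measurable[measurable]: "\<alpha> \<in> borel_measurable unit_interval"
  and \<beta>_measurable[measurable]: "\<beta> \<in> borel_measurable unit_interval"
  using \<alpha>_continuous \<beta>_continuous by (simp_all add: borel_measurable_continuous_on_restrict_lborel)

lemma QR_Ut_eq: "QR_Ut \<alpha> \<beta> X Y t \<omega> = of_bool (\<alpha> t + \<beta> t \<bullet> X \<omega> < Y \<omega>)"
  by (simp add: QR_Ut_def)

lemma QR_Ut_measurable_pair:
  "(\<lambda>(t, \<omega>). QR_Ut \<alpha> \<beta> X Y t \<omega>) \<in> borel_measurable (unit_interval \<Otimes>\<^sub>M M)"
  "(\<lambda>(\<omega>, t). QR_Ut \<alpha> \<beta> X Y t \<omega>) \<in> borel_measurable (M \<Otimes>\<^sub>M unit_interval)"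
  unfolding QR_Ut_eq by measurable

lemma QR_Ut_measurable[measurable]: "(\<lambda>\<omega>. QR_Ut \<alpha> \<beta> X Y t \<omega>) \<in> borel_measurable M"
  unfolding QR_Ut_eq by measurable

lemma U_eq_integral: "U \<omega> = (\<integral>t. QR_Ut \<alpha> \<beta> X Y t \<omega> \<partial>unit_interval)"
  by (simp add: QR_U_def set_integral_unit_interval)

lemma U_measurable[measurable]: "U \<in> borel_measurable M"
proof -
  interpret I: prob_space unit_interval by (rule prob_space_unit_interval)
  show ?thesis
    unfolding U_eq_integral by (rule I.borel_measurable_lebesgue_integral[OF QR_Ut_measurable_pair(2)])
qed

lemma U_eq_sublevel_length: "U \<omega> = sublevel_length (\<lambda>t. \<alpha> t + \<beta> t \<bullet> X \<omega>) (Y \<omega>)"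
proof -
  have "U \<omega> = (LBINT t. indicator {t\<in>{0..1}. \<alpha> t + \<beta> t \<bullet> X \<omega> < Y \<omega>} t)"
    unfolding QR_U_def set_lebesgue_integral_def
    by (rule Bochner_Integration.integral_cong) (auto simp: QR_Ut_def split: split_indicator)
  then show ?thesis by (simp add: sublevel_length_def)
qed

lemma U_range: "U \<omega> \<in> {0..1}"
proof -
  have "continuous_on {0..1} (\<lambda>t. \<alpha> t + \<beta> t \<bullet> X \<omega>)"
    using \<alpha>_continuous \<beta>_continuous by (intro continuous_intros)
  then have "sublevel_length (\<lambda>t. \<alpha> t + \<beta> t \<bullet> X \<omega>) (Y \<omega>) \<le> 1"
    by (intro sublevel_length_le_1 borel_measurable_continuous_on_restrict)
  then show ?thesis by (simp add: U_eq_sublevel_length sublevel_length_def)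
qed

lemma AE_U_threshold:
  "AE \<omega> in M. \<forall>t\<in>{0..1}. (\<alpha> t + \<beta> t \<bullet> X \<omega> < Y \<omega> \<longrightarrow> t \<le> U \<omega>)
                           \<and> (t < U \<omega> \<longrightarrow> \<alpha> t + \<beta> t \<bullet> X \<omega> < Y \<omega>)"
  using AE_mono
proof eventually_elim
  case (elim \<omega>)
  show ?case
    unfolding U_eq_sublevel_length
    using le_sublevel_length[OF elim] sublevel_length_le[OF elim] by (meson not_le)
qed

lemma U_uniform: "uniform01 M U"
proof (rule uniform01I_tail_bounds[OF U_measurable U_range])
  fix t :: real assume t: "t \<in> {0..1}"
  have "prob {\<omega>\<in>space M. t < U \<omega>} \<le> prob {\<omega>\<in>space M. Y \<omega> > \<alpha> t + \<beta> t \<bullet> X \<omega>}"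
    by (rule finite_measure_mono_AE) (use AE_U_threshold t in \<open>auto\<close>)
  then show "prob {\<omega>\<in>space M. t < U \<omega>} \<le> 1 - t" using prob_above[OF t] by simp
  have "prob {\<omega>\<in>space M. Y \<omega> > \<alpha> t + \<beta> t \<bullet> X \<omega>} \<le> prob {\<omega>\<in>space M. t \<le> U \<omega>}"
    by (rule finite_measure_mono_AE) (use AE_U_threshold t in \<open>auto\<close>)
  then show "1 - t \<le> prob {\<omega>\<in>space M. t \<le> U \<omega>}" using prob_above[OF t] by simp
qed

text \<open>Levels outside \<open>[0, 1]\<close> reduce to the end points, since \<open>0 < U \<le> 1\<close> almost surely.\<close>
lemma AE_indicator_greaterThan_U:
  "AE \<omega> in M. indicator {x<..} (U \<omega>) = QR_Ut \<alpha> \<beta> X Y (max 0 (min 1 x)) \<omega>"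
  using AE_U_threshold uniform01_AE_neq[OF U_uniform, of "max 0 (min 1 x)"]
    uniform01_AE_neq[OF U_uniform, of 0]
proof eventually_elim
  case (elim \<omega>)
  let ?c = "max 0 (min 1 x)"
  have "?c < U \<omega> \<longleftrightarrow> x < U \<omega>"
    using U_range[of \<omega>] elim(3) by (auto simp: max_def min_def)
  moreover have "QR_Ut \<alpha> \<beta> X Y ?c \<omega> = of_bool (?c < U \<omega>)"
    using elim(1,2) by (force simp: QR_Ut_eq)
  ultimately show ?case by (simp add: indicator_def)
qed

lemma U_cond_exp_zero: "cond_exp_zero M X U"
  unfolding cond_exp_zero_iff_greaterThan[OF U_measurable integrable_X]
proof
  fix x :: real
  have "(\<integral>\<omega>. indicator {x<..} (U \<omega>) *\<^sub>R X \<omega> \<partial>M)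
      = (\<integral>\<omega>. QR_Ut \<alpha> \<beta> X Y (max 0 (min 1 x)) \<omega> *\<^sub>R X \<omega> \<partial>M)"
  proof (rule integral_cong_AE)
    show "AE \<omega> in M. indicator {x<..} (U \<omega>) *\<^sub>R X \<omega> = QR_Ut \<alpha> \<beta> X Y (max 0 (min 1 x)) \<omega> *\<^sub>R X \<omega>"
      using AE_indicator_greaterThan_U[of x] by eventually_elim simp
  qed measurable
  also have "\<dots> = 0" by (rule orthogonal) auto
  finally show "(\<integral>\<omega>. indicator {x<..} (U \<omega>) *\<^sub>R X \<omega> \<partial>M) = 0" .
qed

lemma AE_Y_eq: "AE \<omega> in M. Y \<omega> = \<alpha> (U \<omega>) + \<beta> (U \<omega>) \<bullet> X \<omega>"
  using AE_mono uniform01_AE_neq[OF U_uniform, of 0] uniform01_AE_neq[OF U_uniform, of 1]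
proof eventually_elim
  case (elim \<omega>)
  have "continuous_on {0..1} (\<lambda>t. \<alpha> t + \<beta> t \<bullet> X \<omega>)"
    using \<alpha>_continuous \<beta>_continuous by (intro continuous_intros)
  moreover have "0 < U \<omega>" "U \<omega> < 1" using elim(2,3) U_range[of \<omega>] by auto
  ultimately show ?case
    using sublevel_length_solves[OF elim(1)] by (simp add: U_eq_sublevel_length)
qed

lemma integral_indicator_greaterThan_mult_le_QR_Ut:
  assumes V: "uniform01 M V" and V_cond: "cond_exp_zero M X V" and t: "t \<in> {0..1}"
  shows "(\<integral>\<omega>. indicator {t<..} (V \<omega>) * Y \<omega> \<partial>M) \<le> (\<integral>\<omega>. QR_Ut \<alpha> \<beta> X Y t \<omega> * Y \<omega> \<partial>M)"
  unfolding QR_Ut_def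
proof (rule bathtub_inequality[OF integrable_X integrable_Y])
  have [measurable]: "V \<in> borel_measurable M" using V by (simp add: uniform01_def)
  show "(\<lambda>\<omega>. indicator {t<..} (V \<omega>)) \<in> borel_measurable M" by measurable
  have "(\<integral>\<omega>. indicator {t<..} (V \<omega>) \<partial>M) = (\<integral>\<omega>. indicator {\<omega>\<in>space M. t < V \<omega>} \<omega> \<partial>M)"
    by (rule Bochner_Integration.integral_cong) (auto split: split_indicator)
  also have "\<dots> = prob {\<omega>\<in>space M. t < V \<omega>}"
    by (simp add: Int_absorb2[OF Collect_subset])
  also have "\<dots> = prob {\<omega>\<in>space M. Y \<omega> > \<alpha> t + \<beta> t \<bullet> X \<omega>}"
    using uniform01_prob_greaterThan[OF V t] prob_above[OF t] by simp
  also have "\<dots> = (\<integral>\<omega>. indicator {\<omega>. \<alpha> t + \<beta> t \<bullet> X \<omega> < Y \<omega>} \<omega> \<partial>M)"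
    by (simp add: Int_def conj_commute)
  finally show "(\<integral>\<omega>. indicator {t<..} (V \<omega>) \<partial>M) = \<dots>" .
  have "(\<integral>\<omega>. indicator {t<..} (V \<omega>) *\<^sub>R X \<omega> \<partial>M) = 0"
    using V_cond cond_exp_zero_iff_greaterThan[OF _ integrable_X] by simp
  also have "\<dots> = (\<integral>\<omega>. indicator {\<omega>. \<alpha> t + \<beta> t \<bullet> X \<omega> < Y \<omega>} \<omega> *\<^sub>R X \<omega> \<partial>M)"
    using orthogonal[OF t] by (simp add: QR_Ut_def)
  finally show "(\<integral>\<omega>. indicator {t<..} (V \<omega>) *\<^sub>R X \<omega> \<partial>M) = \<dots>" .
qed (auto split: split_indicator)

lemma U_maximizes:
  assumes V: "uniform01 M V" and V_cond: "cond_exp_zero M X V"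
  shows "(\<integral>\<omega>. V \<omega> * Y \<omega> \<partial>M) \<le> (\<integral>\<omega>. U \<omega> * Y \<omega> \<partial>M)"
proof -
  have [measurable]: "V \<in> borel_measurable M" using V by (simp add: uniform01_def)
  obtain B where B: "\<forall>\<omega>\<in>space M. \<bar>Y \<omega>\<bar> \<le> B" using Y_bounded by blast
  have F: "(\<lambda>(t, \<omega>). indicator {t<..} (V \<omega>) * Y \<omega>) \<in> borel_measurable (unit_interval \<Otimes>\<^sub>M M)"
    and G: "(\<lambda>(t, \<omega>). QR_Ut \<alpha> \<beta> X Y t \<omega> * Y \<omega>) \<in> borel_measurable (unit_interval \<Otimes>\<^sub>M M)"
    using QR_Ut_measurable_pair(1) by (simp_all add: indicator_def)
  have F_bound: "\<bar>indicator {t<..} (V \<omega>) * Y \<omega>\<bar> \<le> B"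
    and G_bound: "\<bar>QR_Ut \<alpha> \<beta> X Y t \<omega> * Y \<omega>\<bar> \<le> B" if "\<omega> \<in> space M" for t \<omega>
    using B that by (auto simp: QR_Ut_eq abs_mult split: split_indicator)
  note level = integral_indicator_greaterThan_mult_le_QR_Ut[OF V V_cond]
  have "(\<integral>\<omega>. V \<omega> * Y \<omega> \<partial>M) = (\<integral>\<omega>. (LINT t:{0..1}|lborel. indicator {t<..} (V \<omega>) * Y \<omega>) \<partial>M)"
  proof (rule integral_cong_AE)
    show "AE \<omega> in M. V \<omega> * Y \<omega> = (LINT t:{0..1}|lborel. indicator {t<..} (V \<omega>) * Y \<omega>)"
      using uniform01_AE_in_unit_interval[OF V]
      by eventually_elim (simp add: set_integral_mult_left set_integral_indicator_greaterThan_unit_interval)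
    show "(\<lambda>\<omega>. LINT t:{0..1}|lborel. indicator {t<..} (V \<omega>) * Y \<omega>) \<in> borel_measurable M"
      by (rule Fubini_unit_interval(1)[OF F F_bound])
  qed measurable
  also have "\<dots> = (LINT t:{0..1}|lborel. \<integral>\<omega>. indicator {t<..} (V \<omega>) * Y \<omega> \<partial>M)"
    by (rule Fubini_unit_interval(3)[OF F F_bound])
  also have "\<dots> \<le> (LINT t:{0..1}|lborel. \<integral>\<omega>. QR_Ut \<alpha> \<beta> X Y t \<omega> * Y \<omega> \<partial>M)"
    unfolding set_integral_unit_interval
    by (rule integral_mono)
       (use Fubini_unit_interval(2)[OF F F_bound] Fubini_unit_interval(2)[OF G G_bound] level in auto)
  also have "\<dots> = (\<integral>\<omega>. (LINT t:{0..1}|lborel. QR_Ut \<alpha> \<beta> X Y t \<omega> * Y \<omega>) \<partial>M)"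
    by (rule Fubini_unit_interval(3)[OF G G_bound, symmetric])
  also have "\<dots> = (\<integral>\<omega>. U \<omega> * Y \<omega> \<partial>M)"
    by (simp add: QR_U_def set_integral_mult_left)
  finally show ?thesis .
qed

end

theorem mainTheorem7:
  fixes M :: "'a measure" and X :: "'a \<Rightarrow> real ^ 'n" and Y :: "'a \<Rightarrow> real"
    and \<alpha> :: "real \<Rightarrow> real" and \<beta> :: "real \<Rightarrow> real ^ 'n"
  assumes "prob_space M"
    and "X \<in> borel_measurable M" and "Y \<in> borel_measurable M"
    and "\<exists>B. \<forall>\<omega>\<in>space M. norm (X \<omega>) \<le> B"
    and "\<exists>B. \<forall>\<omega>\<in>space M. \<bar>Y \<omega>\<bar> \<le> B"
    and "integral\<^sup>L M X = 0"
    and "\<forall>a b. measure M {\<omega>\<in>space M. Y \<omega> = a + b \<bullet> X \<omega>} = 0"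
    and "continuous_on {0..1} \<alpha>" and "continuous_on {0..1} \<beta>"
    and "\<forall>t\<in>{0..1}. measure M {\<omega>\<in>space M. Y \<omega> > \<alpha> t + \<beta> t \<bullet> X \<omega>} = 1 - t"
    and "\<forall>t\<in>{0..1}. integral\<^sup>L M (\<lambda>\<omega>. QR_Ut \<alpha> \<beta> X Y t \<omega> *\<^sub>R X \<omega>) = 0"
    and "AE x in distr M borel X. mono_on {0..1} (\<lambda>t. \<alpha> t + \<beta> t \<bullet> x)"
  shows "uniform01 M (QR_U \<alpha> \<beta> X Y)
    \<and> cond_exp_zero M X (QR_U \<alpha> \<beta> X Y)
    \<and> (AE \<omega> in M. Y \<omega> = \<alpha> (QR_U \<alpha> \<beta> X Y \<omega>) + \<beta> (QR_U \<alpha> \<beta> X Y \<omega>) \<bullet> X \<omega>)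
    \<and> (\<forall>V. uniform01 M V \<and> cond_exp_zero M X V \<longrightarrow>
           integral\<^sup>L M (\<lambda>\<omega>. V \<omega> * Y \<omega>) \<le> integral\<^sup>L M (\<lambda>\<omega>. QR_U \<alpha> \<beta> X Y \<omega> * Y \<omega>))"
proof -
  interpret quasi_specified_quantile_regression M X Y \<alpha> \<beta>
    unfolding quasi_specified_quantile_regression_def quasi_specified_quantile_regression_axioms_def
    using assms AE_distrD[OF assms(2,12)] by auto
  show ?thesis
    using U_uniform U_cond_exp_zero AE_Y_eq U_maximizes by blast
qed

end
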